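(* Let $\mathbf p$ be a probability vector in $\mathbb R^k$ with all $p_j>0$, let $p_{\max}=\max_jp_j$, and define $$\alpha_{\min}(\mathbf p)=1-\frac{p_{\max}^{-1/3}}{\sum_{j=1}^kp_j^{2/3}}.$$ Then for every $\alpha\in[\alpha_{\min}(\mathbf p),1]$, $v^*_\alpha(\mathbf p)=\|\mathbf p\|_{2/3}=\big(\sum_jp_j^{2/3}\big)^{3/2}$. Consequently, for every such $\alpha$, the simple regret bound of Algorithm 1, namely $O\big(\sqrt{n/T}\,v^*_\alpha(\mathbf p)\big)$, equals $O\big(\sqrt{n/T}\,\|\mathbf p\|_{2/3}\big)$, the optimal rate of fully active policies, which is also the optimal rate over all policies.
   Context: $v^*_\alpha(\mathbf p)$ denotes the minimum value of $\sum_jp_j/\sqrt{q_j}$ over $\mathbf q\in\mathbb R^k$ with $q_j>0$, $\sum_jq_j=1$, subject to $q_j\ge(1-\alpha)p_j$ for all $j$. Setting: bandit with subpopulations with $n$ treatments, $k$ subpopulations, rewards in $[0,1]$, subpopulation distribution $\mathbf p$ known to the agent; a round is passive if $C_t\sim\mathbf p$ is revealed and active if the agent chooses $C_t$; worst-case simple regret $\sup_{\boldsymbol\nu}\sum_jp_j\mathbb E[\max_i\mu_{i,j}-\mu_{\hat a_j,j}]$ over $T$ rounds. Algorithm 1 (budget $\alpha$, using an anytime minimax-optimal simple-regret bandit subroutine $\mathrm{Alg}_{SR}$ per subpopulation): sample $C_t\sim\mathbf p$ for the first $\lfloor(1-\alpha)T\rfloor$ rounds; then with $c^*$ the unique solution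 of $\sum_j\max((1-\alpha)p_j,cp_j^{2/3})=1$, $q^*_j=\max((1-\alpha)p_j,c^*p_j^{2/3})$, $r_j=(q^*_j-(1-\alpha)p_j)/\alpha$, sample $C_t\sim\mathbf r$ in the remaining rounds; treatments and final recommendations come from the subroutine copy for $C_t$. Its worst-case simple regret is $O(\sqrt{n/T}\,v^*_\alpha(\mathbf p))$ for large $T$. Fully active policies may choose $C_t$ every round; $O$ hides universal constants. *)

theory Defs
  imports Complex_Main
begin

definition feasible_alloc :: "real \<Rightarrow> ('k::finite \<Rightarrow> real) \<Rightarrow> ('k \<Rightarrow> real) \<Rightarrow> bool" where
  "feasible_alloc \<alpha> p q \<longleftrightarrow>
     (\<forall>j. q j > 0) \<and> (\<Sum>j\<in>UNIV. q j) = 1 \<and> (\<forall>j. q j \<ge> (1 - \<alpha>) * p j)"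

definition v_star :: "real \<Rightarrow> ('k::finite \<Rightarrow> real) \<Rightarrow> real" where
  "v_star \<alpha> p = Inf ((\<lambda>q. \<Sum>j\<in>UNIV. p j / sqrt (q j)) ` {q. feasible_alloc \<alpha> p q})"

definition alpha_min :: "('k::finite \<Rightarrow> real) \<Rightarrow> real" where
  "alpha_min p = 1 - (Max (range p)) powr (-1/3) / (\<Sum>j\<in>UNIV. p j powr (2/3))"

end

theory Submission
  imports Defs
begin

text \<open>Without the constraint \<open>q \<ge> (1 - \<alpha>) p\<close>, Hoelder's inequality bounds
\<open>\<Sum>j. p j / sqrt (q j)\<close> from below by \<open>\<parallel>p\<parallel>\<^sub>2\<^sub>/\<^sub>3 = (\<Sum>j. p j powr (2/3)) powr (3/2)\<close> on the
simplex, with equality at the allocation proportional to \<open>p powr (2/3)\<close>. That allocation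
satisfies the constraint exactly when \<open>\<alpha> \<ge> alpha_min p\<close>, the binding coordinate being the
one with the largest \<open>p j\<close>; hence it is also the constrained minimiser. Neither
\<open>\<Sum>j. p j = 1\<close> nor \<open>\<alpha> \<le> 1\<close> is needed.\<close>

lemma cube_root_powers:
  fixes a :: real
  assumes "a \<ge> 0"
  shows "(a powr (1/3)) ^ 2 = a powr (2/3)" and "(a powr (1/3)) ^ 3 = a"
  using assms by (simp_all flip: powr_realpow' add: powr_powr)

lemma powr_three_halves:
  fixes x :: real
  assumes "x \<ge> 0"
  shows "x powr (3/2) = sqrt x ^ 3"
  using powr_half_sqrt_powr[OF assms, of 3] assms
  by (simp add: powr_realpow' real_sqrt_power)

lemma three_sq_mul_le_am_gm:
  fixes r u :: real
  assumes "r \<ge> 0" "u \<ge> 0"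
  shows "3 * r^2 * u \<le> 2 * r^3 + u^3"
proof -
  have "0 \<le> (r - u)^2 * (2 * r + u)" using assms by simp
  thus ?thesis by (simp add: algebra_simps power2_eq_square power3_eq_cube)
qed

text \<open>A supporting plane of the convex function \<open>(a, q) \<mapsto> a / sqrt q\<close>; it is tight
at \<open>q = a powr (2/3) / c\<^sup>2\<close>, so with \<open>c\<^sup>2 = \<Sum>j. p j powr (2/3)\<close> it is tight along
\<open>holder_alloc\<close> below.\<close>
lemma div_sqrt_tangent_bound:
  fixes a q c :: real
  assumes "a \<ge> 0" "q > 0" "c \<ge> 0"
  shows "3 * c * a powr (2/3) \<le> 2 * (a / sqrt q) + c^3 * q"
proof -
  define r s where "r = a powr (1/3)" and "s = sqrt q"
  have s: "s > 0" "s^2 = q" using assms(2) by (simp_all add: s_def)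
  have "3 * r^2 * (c * s) \<le> 2 * r^3 + (c * s)^3"
    using assms by (intro three_sq_mul_le_am_gm) (simp_all add: r_def s_def)
  hence "3 * c * r^2 \<le> 2 * (r^3 / s) + c^3 * s^2"
    using s(1) by (simp add: field_simps power2_eq_square power3_eq_cube)
  thus ?thesis using assms(1) s by (simp add: r_def s_def cube_root_powers)
qed

lemma two_thirds_norm_le_sum_div_sqrt:
  fixes p q :: "'k::finite \<Rightarrow> real"
  assumes "\<And>j. p j \<ge> 0" "\<And>j. q j > 0" "(\<Sum>j\<in>UNIV. q j) = 1"
  shows "(\<Sum>j\<in>UNIV. p j powr (2/3)) powr (3/2) \<le> (\<Sum>j\<in>UNIV. p j / sqrt (q j))"
proof -
  define S where "S = (\<Sum>j\<in>UNIV. p j powr (2/3))"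
  define c where "c = sqrt S"
  have S: "S \<ge> 0" by (simp add: S_def sum_nonneg)
  have "3 * c * S = (\<Sum>j\<in>UNIV. 3 * c * p j powr (2/3))"
    by (simp add: S_def sum_distrib_left)
  also have "\<dots> \<le> (\<Sum>j\<in>UNIV. 2 * (p j / sqrt (q j)) + c^3 * q j)"
    using assms S by (intro sum_mono div_sqrt_tangent_bound) (simp_all add: c_def)
  also have "\<dots> = 2 * (\<Sum>j\<in>UNIV. p j / sqrt (q j)) + c^3"
    by (simp only: sum.distrib sum_distrib_left[symmetric] assms(3) mult_1_right)
  finally have "3 * c * S \<le> 2 * (\<Sum>j\<in>UNIV. p j / sqrt (q j)) + c^3" .
  moreover have "c * S = c^3" using S by (simp add: c_def power3_eq_cube)
  ultimately show ?thesis using S by (simp add: powr_three_halves flip: S_def c_def)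
qed

definition holder_alloc :: "('k::finite \<Rightarrow> real) \<Rightarrow> 'k \<Rightarrow> real" where
  "holder_alloc p j = p j powr (2/3) / (\<Sum>i\<in>UNIV. p i powr (2/3))"

lemma sum_powr_two_thirds_pos:
  fixes p :: "'k::finite \<Rightarrow> real"
  assumes "\<And>j. p j > 0"
  shows "(\<Sum>j\<in>UNIV. p j powr (2/3)) > 0"
  using assms by (intro sum_pos) (auto simp: less_imp_neq[symmetric])

lemma holder_alloc_pos_sum:
  fixes p :: "'k::finite \<Rightarrow> real"
  assumes "\<And>j. p j > 0"
  shows "holder_alloc p j > 0" and "(\<Sum>j\<in>UNIV. holder_alloc p j) = 1"
proof -
  have S: "(\<Sum>i\<in>UNIV. p i powr (2/3)) > 0" by (rule sum_powr_two_thirds_pos[OF assms])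
  show "holder_alloc p j > 0"
    using S assms[of j] by (simp add: holder_alloc_def)
  show "(\<Sum>j\<in>UNIV. holder_alloc p j) = 1"
    using S by (simp add: holder_alloc_def flip: sum_divide_distrib)
qed

lemma sum_div_sqrt_holder_alloc:
  fixes p :: "'k::finite \<Rightarrow> real"
  assumes "\<And>j. p j > 0"
  shows "(\<Sum>j\<in>UNIV. p j / sqrt (holder_alloc p j)) = (\<Sum>j\<in>UNIV. p j powr (2/3)) powr (3/2)"
proof -
  define S where "S = (\<Sum>j\<in>UNIV. p j powr (2/3))"
  have S: "S > 0" using sum_powr_two_thirds_pos[OF assms] by (simp add: S_def)
  have "p j / sqrt (holder_alloc p j) = sqrt S * p j powr (2/3)" for j
  proof -
    define r where "r = p j powr (1/3)"
    have r: "r > 0" "r^2 = p j powr (2/3)" "r^3 = p j"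
      using assms[of j] by (simp_all add: r_def cube_root_powers)
    have "holder_alloc p j = r^2 / S"
      by (simp add: holder_alloc_def r(2) flip: S_def)
    hence "sqrt (holder_alloc p j) = r / sqrt S"
      using r(1) by (simp add: real_sqrt_divide)
    hence "p j / sqrt (holder_alloc p j) = r^3 / (r / sqrt S)"
      by (simp add: r(3))
    also have "\<dots> = sqrt S * r^2"
      using r(1) by (simp add: field_simps power2_eq_square power3_eq_cube)
    finally show ?thesis by (simp add: r(2))
  qed
  hence "(\<Sum>j\<in>UNIV. p j / sqrt (holder_alloc p j)) = sqrt S * S"
    by (simp add: S_def sum_distrib_left)
  thus ?thesis using S by (simp add: powr_three_halves power3_eq_cube flip: S_def)
qed

lemma feasible_holder_alloc:
  fixes p :: "'k::finite \<Rightarrow> real"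
  assumes "\<And>j. p j > 0" "alpha_min p \<le> \<alpha>"
  shows "feasible_alloc \<alpha> p (holder_alloc p)"
  unfolding feasible_alloc_def
proof (intro conjI allI holder_alloc_pos_sum[OF assms(1)])
  fix j
  define S where "S = (\<Sum>i\<in>UNIV. p i powr (2/3))"
  have S: "S > 0" using sum_powr_two_thirds_pos[OF assms(1)] by (simp add: S_def)
  have "1 - \<alpha> \<le> Max (range p) powr (-1/3) / S"
    using assms(2) by (simp add: alpha_min_def S_def)
  also have "\<dots> \<le> p j powr (-1/3) / S"
    using assms(1)[of j] S by (intro divide_right_mono powr_mono2') auto
  finally have "(1 - \<alpha>) * p j \<le> p j powr (-1/3) / S * p j"
    by (rule mult_right_mono) (use assms(1)[of j] in simp)
  also have "\<dots> = holder_alloc p j"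
    using powr_add[of "p j" "-1/3" 1] assms(1)[of j] by (simp add: holder_alloc_def S_def)
  finally show "(1 - \<alpha>) * p j \<le> holder_alloc p j" .
qed

theorem lemma6:
  fixes p :: "'k::finite \<Rightarrow> real" and \<alpha> :: real
  assumes "\<forall>j. p j > 0"
    and "(\<Sum>j\<in>UNIV. p j) = 1"
    and "alpha_min p \<le> \<alpha>" and "\<alpha> \<le> 1"
  shows "v_star \<alpha> p = (\<Sum>j\<in>UNIV. p j powr (2/3)) powr (3/2)"
proof -
  have p: "\<And>j. p j > 0" using assms(1) by blast
  have lower: "(\<Sum>j\<in>UNIV. p j powr (2/3)) powr (3/2) \<le> (\<Sum>j\<in>UNIV. p j / sqrt (q j))"
    if "feasible_alloc \<alpha> p q" for q
    using that p by (intro two_thirds_norm_le_sum_div_sqrt) (auto simp: feasible_alloc_def less_imp_le)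
  show ?thesis
    unfolding v_star_def
    using feasible_holder_alloc[OF p assms(3)] sum_div_sqrt_holder_alloc[of p, OF p] lower
    by (intro cInf_eq_minimum) (auto intro!: image_eqI[where x = "holder_alloc p"])
qed

end
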